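(* For every integer $m\geq 1$ and every $\varepsilon\in(0,1]$ there exists $\gamma_0>0$ such that for every $\gamma\in(0,\gamma_0]$ there exists $d_0$ such that the following holds for all $d\geq d_0$ and all reals $q\geq 1/2$. Let $G$ be an $n$-vertex graph with maximum degree $\Delta(G)\leq d$ containing a vertex set $V\subseteq V(G)$ with $|V|=(1\pm\gamma)qn$ and $d_G(v,V)=(1\pm\gamma)qd$ for each $v\in V(G)$. Let $t=\lceil(1-\varepsilon)qn/m\rceil$. Then $G[V]$ contains vertex-disjoint paths $P_1,\dots,P_t$, each of length $m-1$ (i.e. with $m$ vertices), such that each vertex of $G$ has at most $4d/m$ neighbours in $G$ among the endvertices of $P_1,\dots,P_t$.
   Context: For a vertex $v$ and vertex set $U$, $d_G(v,U)=|N_G(v)\cap U|$. For reals $a,b,c$, $a=(1\pm b)c$ means $(1-b)c\leq a\leq(1+b)c$. $G[V]$ is the subgraph of $G$ induced by $V$. *)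

theory Defs
  imports Complex_Main
begin

definition simple_graph :: "'a set \<Rightarrow> ('a \<Rightarrow> 'a \<Rightarrow> bool) \<Rightarrow> bool" where
  "simple_graph Vg E \<longleftrightarrow> finite Vg \<and> (\<forall>u v. E u v \<longrightarrow> u \<in> Vg \<and> v \<in> Vg)
     \<and> (\<forall>u v. E u v \<longrightarrow> E v u) \<and> (\<forall>v. \<not> E v v)"

definition dG :: "('a \<Rightarrow> 'a \<Rightarrow> bool) \<Rightarrow> 'a \<Rightarrow> 'a set \<Rightarrow> nat" where
  "dG E v U = card {u \<in> U. E v u}"

definition pm_approx :: "real \<Rightarrow> real \<Rightarrow> real \<Rightarrow> bool" where
  "pm_approx a b c \<longleftrightarrow> (1 - b) * c \<le> a \<and> a \<le> (1 + b) * c"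

definition is_path_in :: "('a \<Rightarrow> 'a \<Rightarrow> bool) \<Rightarrow> 'a set \<Rightarrow> 'a list \<Rightarrow> bool" where
  "is_path_in E V P \<longleftrightarrow> P \<noteq> [] \<and> distinct P \<and> set P \<subseteq> V
     \<and> (\<forall>i. i + 1 < length P \<longrightarrow> E (P ! i) (P ! (i + 1)))"

end

(*
  Colour the vertices of V with m colours so that every vertex of G has about (1 +- x)/m of its
  neighbours in V in every colour class.  Counting over all colourings, a Chernoff-type bound shows
  that some colouring leaves only an exponentially small (in d) set of bad vertices whose
  neighbourhood is unbalanced.  After deleting the bad vertices and their neighbourhoods, consecutive
  colour classes span bipartite graphs of maximum degree about qd/m in which almost every vertex has
  degree about qd/m, so by Hall's theorem they have almost perfect matchings.  Following these
  matchings from class 0 to class m - 1 gives vertex-disjoint paths with m vertices, almost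
  (1 - eps) q n / m of them.  Their endpoints lie in the classes 0 and m - 1, where every vertex has
  at most about 2qd/m <= 4d/m neighbours, and bad vertices have none.
*)
theory Submission
  imports Defs "HOL-Library.FuncSet"
begin

section \<open>Hall's theorem and large bipartite matchings\<close>

lemma hall_condition_outside_critical:
  fixes N :: "'a \<Rightarrow> 'b set"
  assumes "finite X" "\<forall>x\<in>X. finite (N x)" "\<forall>S\<subseteq>X. card S \<le> card (\<Union>(N ` S))"
    and "S \<subseteq> X" "card (\<Union>(N ` S)) \<le> card S"
  shows "\<forall>T\<subseteq>X - S. card T \<le> card (\<Union>((\<lambda>x. N x - \<Union>(N ` S)) ` T))"
proof (intro allI impI)
  fix T assume T: "T \<subseteq> X - S"
  have fin: "finite (\<Union>(N ` (T \<union> S)))"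
    using assms(1,2,4) T by (intro finite_UN_I) (auto intro: finite_subset)
  have "card (T \<union> S) \<le> card (\<Union>(N ` (T \<union> S)))"
    using assms(3,4) T by blast
  moreover have "card (T \<union> S) = card T + card S"
    using T assms(1,4) by (intro card_Un_disjoint) (auto intro: finite_subset)
  moreover have "\<Union>((\<lambda>x. N x - \<Union>(N ` S)) ` T) = \<Union>(N ` (T \<union> S)) - \<Union>(N ` S)"
    by auto
  then have "card (\<Union>((\<lambda>x. N x - \<Union>(N ` S)) ` T)) = card (\<Union>(N ` (T \<union> S))) - card (\<Union>(N ` S))"
    using fin by (simp add: card_Diff_subset finite_subset)
  ultimately show "card T \<le> card (\<Union>((\<lambda>x. N x - \<Union>(N ` S)) ` T))"
    using assms(5) by arith
qed

lemma hall_condition_remove_point: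
  fixes N :: "'a \<Rightarrow> 'b set"
  assumes surplus: "\<And>T. T \<noteq> {} \<Longrightarrow> T \<subset> X \<Longrightarrow> card T < card (\<Union>(N ` T))" and "x \<in> X"
  shows "\<forall>T\<subseteq>X - {x}. card T \<le> card (\<Union>((\<lambda>z. N z - {y}) ` T))"
proof (intro allI impI)
  fix T assume T: "T \<subseteq> X - {x}"
  show "card T \<le> card (\<Union>((\<lambda>z. N z - {y}) ` T))"
  proof (cases "T = {}")
    case False
    have "card T < card (\<Union>(N ` T))" using surplus[OF False] T \<open>x \<in> X\<close> by blast
    moreover have "\<Union>((\<lambda>z. N z - {y}) ` T) = \<Union>(N ` T) - {y}" by auto
    ultimately show ?thesis using card_Diff_singleton_if[of "\<Union>(N ` T)" y] by auto
  qed simp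
qed

lemma sdr_union_critical:
  fixes N :: "'a \<Rightarrow> 'b set"
  assumes "S \<subseteq> X" and f1: "inj_on f1 S" "\<forall>x\<in>S. f1 x \<in> N x"
    and f2: "inj_on f2 (X - S)" "\<forall>x\<in>X - S. f2 x \<in> N x - \<Union>(N ` S)"
  shows "\<exists>f. inj_on f X \<and> (\<forall>x\<in>X. f x \<in> N x)"
proof -
  let ?f = "\<lambda>x. if x \<in> S then f1 x else f2 x"
  have "f1 ` S \<subseteq> \<Union>(N ` S)" using f1(2) by auto
  moreover have "f2 ` (X - S) \<inter> \<Union>(N ` S) = {}" using f2(2) by auto
  ultimately have "f1 ` S \<inter> f2 ` (X - S) = {}" by auto
  then have "inj_on ?f (S \<union> (X - S))" by (rule inj_on_disjoint_Un[OF f1(1) f2(1)])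
  moreover have "S \<union> (X - S) = X" using assms(1) by auto
  ultimately show ?thesis using f1(2) f2(2) by (intro exI[of _ ?f]) auto
qed

lemma sdr_insert:
  fixes N :: "'a \<Rightarrow> 'b set"
  assumes "x \<in> X" "y \<in> N x" and f: "inj_on f (X - {x})" "\<forall>z\<in>X - {x}. f z \<in> N z - {y}"
  shows "\<exists>f. inj_on f X \<and> (\<forall>x\<in>X. f x \<in> N x)"
proof -
  have "inj_on (f(x := y)) (insert x (X - {x}))"
    using f by (auto simp: inj_on_def)
  then have "inj_on (f(x := y)) X" using assms(1) by (simp add: insert_absorb)
  then show ?thesis using f(2) assms(2) by (intro exI[of _ "f(x := y)"]) auto
qed

theorem hall_marriage:
  fixes N :: "'a \<Rightarrow> 'b set"
  assumes "finite X" "\<forall>x\<in>X. finite (N x)" "\<forall>S\<subseteq>X. card S \<le> card (\<Union>(N ` S))"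
  shows "\<exists>f. inj_on f X \<and> (\<forall>x\<in>X. f x \<in> N x)"
  using assms
proof (induction "card X" arbitrary: X N rule: less_induct)
  case less
  show ?case
  proof (cases "\<exists>S. S \<noteq> {} \<and> S \<subset> X \<and> card (\<Union>(N ` S)) \<le> card S")
    case True
    then obtain S where S: "S \<noteq> {}" "S \<subset> X" "card (\<Union>(N ` S)) \<le> card S" by blast
    have "\<exists>f. inj_on f S \<and> (\<forall>x\<in>S. f x \<in> N x)"
    proof (intro less.hyps)
      show "card S < card X" using S(2) less.prems(1) by (rule psubset_card_mono[rotated])
      show "finite S" using S(2) less.prems(1) by (meson finite_subset psubset_imp_subset)
    qed (use S less.prems in auto)
    moreover have "\<exists>f. inj_on f (X - S) \<and> (\<forall>x\<in>X - S. f x \<in> N x - \<Union>(N ` S))"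
    proof (intro less.hyps)
      show "card (X - S) < card X"
        using S less.prems(1) by (intro psubset_card_mono) auto
      show "\<forall>T\<subseteq>X - S. card T \<le> card (\<Union>((\<lambda>x. N x - \<Union>(N ` S)) ` T))"
        using S by (intro hall_condition_outside_critical less.prems) auto
    qed (use less.prems in auto)
    ultimately show ?thesis using sdr_union_critical[of S X] S(2) by blast
  next
    case False
    then have surplus: "\<And>T. T \<noteq> {} \<Longrightarrow> T \<subset> X \<Longrightarrow> card T < card (\<Union>(N ` T))"
      by (meson not_le)
    show ?thesis
    proof (cases "X = {}")
      case False
      then obtain x where x: "x \<in> X" by blast
      have "card {x} \<le> card (\<Union>(N ` {x}))" using less.prems(3) x by blast
      then obtain y where y: "y \<in> N x" by fastforce
      have "\<exists>f. inj_on f (X - {x}) \<and> (\<forall>z\<in>X - {x}. f z \<in> N z - {y})"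
      proof (intro less.hyps)
        show "card (X - {x}) < card X" using less.prems(1) x by (rule card_Diff1_less)
      qed (use less.prems hall_condition_remove_point[OF surplus x] in auto)
      then show ?thesis using sdr_insert[of x X y N] x y by blast
    qed simp
  qed
qed

lemma hall_condition_padded:
  fixes N :: "'a \<Rightarrow> 'b set"
  assumes "finite X" "\<forall>x\<in>X. finite (N x)" "\<forall>S\<subseteq>X. card S \<le> card (\<Union>(N ` S)) + k"
  shows "\<forall>S\<subseteq>X. card S \<le> card (\<Union>x\<in>S. Inl ` N x \<union> Inr ` {..<k} :: ('b + nat) set)"
proof (intro allI impI)
  fix S assume S: "S \<subseteq> X"
  show "card S \<le> card (\<Union>x\<in>S. Inl ` N x \<union> Inr ` {..<k} :: ('b + nat) set)"
  proof (cases "S = {}")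
    case False
    have fin: "finite (\<Union>(N ` S))"
      using S assms(1,2) by (intro finite_UN_I) (auto intro: finite_subset)
    have "(\<Union>x\<in>S. Inl ` N x \<union> Inr ` {..<k}) = Inl ` \<Union>(N ` S) \<union> (Inr ` {..<k} :: ('b + nat) set)"
      using False by auto
    also have "card \<dots> = card (Inl ` \<Union>(N ` S) :: ('b + nat) set) + card (Inr ` {..<k} :: ('b + nat) set)"
      using fin by (intro card_Un_disjoint) auto
    finally show ?thesis using assms(3) S by (simp add: card_image)
  qed simp
qed

text \<open>Padding every neighbourhood with the same k dummy vertices reduces this to Hall's theorem.\<close>
corollary hall_marriage_deficiency:
  fixes N :: "'a \<Rightarrow> 'b set"
  assumes "finite X" "\<forall>x\<in>X. finite (N x)" "\<forall>S\<subseteq>X. card S \<le> card (\<Union>(N ` S)) + k"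
  shows "\<exists>A f. A \<subseteq> X \<and> card X \<le> card A + k \<and> inj_on f A \<and> (\<forall>x\<in>A. f x \<in> N x)"
proof -
  define N' :: "'a \<Rightarrow> ('b + nat) set" where "N' = (\<lambda>x. Inl ` N x \<union> Inr ` {..<k})"
  have "\<forall>x\<in>X. finite (N' x)" using assms(2) unfolding N'_def by auto
  then obtain g where g: "inj_on g X" "\<forall>x\<in>X. g x \<in> N' x"
    using hall_marriage[OF assms(1) _ hall_condition_padded[OF assms]] unfolding N'_def by blast
  define A where "A = {x\<in>X. isl (g x)}"
  have "A \<subseteq> X" unfolding A_def by auto
  have "inj_on (projl \<circ> g) A"
  proof (rule comp_inj_on)
    show "inj_on g A" using g(1) \<open>A \<subseteq> X\<close> by (rule inj_on_subset)
    show "inj_on projl (g ` A)"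
    proof (rule inj_onI)
      fix u v assume uv: "u \<in> g ` A" "v \<in> g ` A" "projl u = projl v"
      then have "isl u" "isl v" unfolding A_def by auto
      then show "u = v" using uv(3) by (metis sum.collapse(1))
    qed
  qed
  moreover have "\<forall>x\<in>A. (projl \<circ> g) x \<in> N x" using g(2) unfolding A_def N'_def by auto
  moreover have "card X \<le> card A + k"
  proof -
    have "g ` (X - A) \<subseteq> Inr ` {..<k}" using g(2) unfolding A_def N'_def by auto
    then have "card (g ` (X - A)) \<le> k" using card_mono[of "Inr ` {..<k}"] by (simp add: card_image)
    moreover have "card (g ` (X - A)) = card (X - A)"
      using g(1) by (simp add: card_image inj_on_diff)
    moreover have "card (X - A) = card X - card A" "card A \<le> card X"
      using assms(1) \<open>A \<subseteq> X\<close> by (simp_all add: card_Diff_subset card_mono finite_subset)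
    ultimately show ?thesis by linarith
  qed
  ultimately show ?thesis using \<open>A \<subseteq> X\<close> by blast
qed

lemma double_counting:
  assumes "finite S" "finite T"
  shows "(\<Sum>x\<in>S. card {y\<in>T. R x y}) = (\<Sum>y\<in>T. card {x\<in>S. R x y})"
proof -
  have "(\<Sum>x\<in>S. card {y\<in>T. R x y}) = (\<Sum>x\<in>S. \<Sum>y\<in>T. if R x y then 1 else 0)"
    using assms by (simp add: sum.If_cases Int_def conj_commute)
  also have "\<dots> = (\<Sum>y\<in>T. \<Sum>x\<in>S. if R x y then 1 else 0)" by (rule sum.swap)
  also have "\<dots> = (\<Sum>y\<in>T. card {x\<in>S. R x y})"
    using assms by (simp add: sum.If_cases Int_def conj_commute)
  finally show ?thesis .
qed

lemma bipartite_sum_degrees_le: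
  assumes "finite X" "finite Y" "S \<subseteq> X"
    and "\<forall>y\<in>Y. real (card {x\<in>X. R x y}) \<le> \<Delta>"
  shows "(\<Sum>x\<in>S. real (card {y\<in>Y. R x y})) \<le> \<Delta> * real (card (\<Union>x\<in>S. {y\<in>Y. R x y}))"
proof -
  define U where "U = (\<Union>x\<in>S. {y\<in>Y. R x y})"
  have fin: "finite S" "finite U" using assms(1-3) unfolding U_def by (auto intro: finite_subset)
  have "(\<Sum>x\<in>S. card {y\<in>Y. R x y}) = (\<Sum>x\<in>S. card {y\<in>U. R x y})"
    unfolding U_def by (intro sum.cong refl arg_cong[where f=card]) auto
  also have "\<dots> = (\<Sum>y\<in>U. card {x\<in>S. R x y})" using double_counting[OF fin] .
  finally have "(\<Sum>x\<in>S. real (card {y\<in>Y. R x y})) = (\<Sum>y\<in>U. real (card {x\<in>S. R x y}))"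
    by (simp flip: of_nat_sum)
  also have "\<dots> \<le> (\<Sum>y\<in>U. \<Delta>)"
  proof (intro sum_mono)
    fix y assume "y \<in> U"
    then have "real (card {x\<in>X. R x y}) \<le> \<Delta>" using assms(4) unfolding U_def by auto
    moreover have "card {x\<in>S. R x y} \<le> card {x\<in>X. R x y}"
      using assms(1,3) by (intro card_mono) auto
    ultimately show "real (card {x\<in>S. R x y}) \<le> \<Delta>" by linarith
  qed
  finally show ?thesis unfolding U_def by (simp add: mult.commute)
qed

theorem bipartite_large_matching:
  assumes fin: "finite X" "finite Y" and \<Delta>: "\<Delta> > 0"
    and deg_X: "\<forall>x\<in>X. real (card {y\<in>Y. R x y}) \<le> \<Delta>"
    and deg_Y: "\<forall>y\<in>Y. real (card {x\<in>X. R x y}) \<le> \<Delta>"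
  shows "\<exists>A f. A \<subseteq> X \<and> inj_on f A \<and> (\<forall>x\<in>A. f x \<in> Y \<and> R x (f x))
           \<and> real (card (X - A)) \<le> real (card X) - (\<Sum>x\<in>X. real (card {y\<in>Y. R x y})) / \<Delta> + 1"
proof -
  define deg where "deg = (\<lambda>x. real (card {y\<in>Y. R x y}))"
  define slack where "slack = (\<lambda>S. \<Sum>x\<in>S. 1 - deg x / \<Delta>)"
  have slack_eq: "slack S = real (card S) - (\<Sum>x\<in>S. deg x) / \<Delta>" for S
    unfolding slack_def by (simp add: sum_subtractf sum_divide_distrib)
  have slack_term_nonneg: "0 \<le> 1 - deg x / \<Delta>" if "x \<in> X" for x
    using deg_X that \<Delta> unfolding deg_def by simp
  have slack_mono: "slack S \<le> slack X" if "S \<subseteq> X" for S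
    unfolding slack_def using fin(1) that slack_term_nonneg by (rule sum_mono2) auto
  define k where "k = nat \<lceil>slack X\<rceil>"
  have hall: "\<forall>S\<subseteq>X. card S \<le> card (\<Union>x\<in>S. {y\<in>Y. R x y}) + k"
  proof (intro allI impI)
    fix S assume S: "S \<subseteq> X"
    have "(\<Sum>x\<in>S. deg x) \<le> \<Delta> * real (card (\<Union>x\<in>S. {y\<in>Y. R x y}))"
      using bipartite_sum_degrees_le[OF fin S deg_Y] unfolding deg_def .
    then have "(\<Sum>x\<in>S. deg x) / \<Delta> \<le> real (card (\<Union>x\<in>S. {y\<in>Y. R x y}))"
      using \<Delta> by (simp add: divide_le_eq mult.commute)
    then have "real (card S) \<le> real (card (\<Union>x\<in>S. {y\<in>Y. R x y})) + slack X"
      using slack_eq[of S] slack_mono[OF S] by linarith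
    then show "card S \<le> card (\<Union>x\<in>S. {y\<in>Y. R x y}) + k" unfolding k_def by linarith
  qed
  have "\<forall>x\<in>X. finite {y\<in>Y. R x y}" using fin(2) by simp
  then obtain A f where A: "A \<subseteq> X" "card X \<le> card A + k" "inj_on f A"
      "\<forall>x\<in>A. f x \<in> {y\<in>Y. R x y}"
    using hall_marriage_deficiency[OF fin(1) _ hall] by blast
  have "slack X \<ge> 0" unfolding slack_def using slack_term_nonneg by (intro sum_nonneg) auto
  moreover have "card (X - A) = card X - card A"
    using A(1) fin(1) by (simp add: card_Diff_subset finite_subset)
  ultimately have "real (card (X - A)) \<le> slack X + 1"
    using A(2) unfolding k_def by linarith
  then show ?thesis using A slack_eq[of X] unfolding deg_def by auto
qed

section \<open>Balanced colourings by counting\<close>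

lemma sum_PiE_power_card_class:
  fixes S :: "'a set" and z :: real
  assumes fin: "finite V" and S: "S \<subseteq> V" and i: "i < m"
  shows "(\<Sum>f\<in>PiE V (\<lambda>_. {..<m}). z ^ card {u\<in>S. f u = i})
         = (z + (real m - 1)) ^ card S * real m ^ (card V - card S)"
proof -
  define w where "w = (\<lambda>u y. if u \<in> S \<and> y = i then z else (1::real))"
  have weight: "z ^ card {u\<in>S. f u = i} = (\<Prod>u\<in>V. w u (f u))" for f
  proof -
    have "(\<Prod>u\<in>V. w u (f u)) = (\<Prod>u\<in>V \<inter> {u. u \<in> S \<and> f u = i}. z) * (\<Prod>u\<in>V - {u. u \<in> S \<and> f u = i}. 1)"
      unfolding w_def using fin by (simp add: prod.If_cases)
    also have "V \<inter> {u. u \<in> S \<and> f u = i} = {u\<in>S. f u = i}" using S by auto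
    finally show ?thesis by simp
  qed
  have row_sum: "(\<Sum>y<m. w u y) = (if u \<in> S then z + (real m - 1) else real m)" for u
  proof (cases "u \<in> S")
    case True
    have "(\<Sum>y<m. w u y) = (\<Sum>y<m. 1 + (if y = i then z - 1 else 0))"
      unfolding w_def using True by (intro sum.cong) auto
    also have "\<dots> = real m + (z - 1)" using i by (simp add: sum.distrib)
    finally show ?thesis using True by simp
  qed (simp add: w_def)
  have "(\<Sum>f\<in>PiE V (\<lambda>_. {..<m}). z ^ card {u\<in>S. f u = i})
      = (\<Sum>f\<in>PiE V (\<lambda>_. {..<m}). \<Prod>u\<in>V. w u (f u))" using weight by simp
  also have "\<dots> = (\<Prod>u\<in>V. \<Sum>y<m. w u y)" using fin by (simp add: prod_sum_PiE)
  also have "\<dots> = (\<Prod>u\<in>V. if u \<in> S then z + (real m - 1) else real m)"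
    using row_sum by simp
  also have "\<dots> = (\<Prod>u\<in>S. z + (real m - 1)) * (\<Prod>u\<in>V - S. real m)"
    using fin S by (simp add: prod.If_cases Int_absorb1 Diff_eq)
  also have "\<dots> = (z + (real m - 1)) ^ card S * real m ^ (card V - card S)"
    using fin S by (simp add: card_Diff_subset finite_subset)
  finally show ?thesis .
qed

lemma power_mean_shift_le_exp:
  fixes z :: real
  assumes "z > 0" "m > 0" "s \<le> n"
  shows "(z + (real m - 1)) ^ s * real m ^ (n - s) \<le> real m ^ n * exp ((z - 1) * real s / real m)"
proof -
  have "z + (real m - 1) = real m * (1 + (z - 1) / real m)" using assms(2) by (simp add: field_simps)
  then have "(z + (real m - 1)) ^ s * real m ^ (n - s) = real m ^ n * (1 + (z - 1) / real m) ^ s"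
    using assms(3) by (simp add: power_mult_distrib power_add[symmetric] mult_ac)
  also have "\<dots> \<le> real m ^ n * exp ((z - 1) / real m) ^ s"
    using assms(1,2) by (intro mult_left_mono power_mono exp_ge_add_one_self) (auto simp: field_simps)
  also have "exp ((z - 1) / real m) ^ s = exp ((z - 1) * real s / real m)"
    by (simp add: exp_of_nat_mult[symmetric] mult_ac)
  finally show ?thesis .
qed

text \<open>Markov's inequality for the weight z ^ |S \<inter> f^-1(i)| over all colourings f: the counting form
  of the Chernoff bound.\<close>
lemma card_funcs_exponential_moment:
  fixes S :: "'a set" and z a :: real and T :: "('a \<Rightarrow> nat) \<Rightarrow> bool"
  assumes fin: "finite V" and S: "S \<subseteq> V" and i: "i < m" and z: "z > 0"
    and T: "\<And>f. T f \<Longrightarrow> z powr a \<le> z ^ card {u\<in>S. f u = i}"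
  shows "real (card {f\<in>PiE V (\<lambda>_. {..<m}). T f})
         \<le> real m ^ card V * exp ((z - 1) * real (card S) / real m - a * ln z)"
proof -
  define F where "F = PiE V (\<lambda>_. {..<m})"
  have "finite F" unfolding F_def using fin by (simp add: finite_PiE)
  have za: "z powr a = exp (a * ln z)" "z powr a > 0" using z by (simp_all add: powr_def mult_ac)
  have "real (card {f\<in>F. T f}) = (\<Sum>f\<in>{f\<in>F. T f}. 1)" by simp
  also have "\<dots> \<le> (\<Sum>f\<in>{f\<in>F. T f}. z ^ card {u\<in>S. f u = i} / z powr a)"
    using T za(2) by (intro sum_mono) auto
  also have "\<dots> \<le> (\<Sum>f\<in>F. z ^ card {u\<in>S. f u = i} / z powr a)"
    using \<open>finite F\<close> z by (intro sum_mono2) auto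
  also have "\<dots> = (z + (real m - 1)) ^ card S * real m ^ (card V - card S) / z powr a"
    unfolding F_def sum_divide_distrib[symmetric] sum_PiE_power_card_class[OF fin S i] ..
  also have "\<dots> \<le> real m ^ card V * exp ((z - 1) * real (card S) / real m) / exp (a * ln z)"
    unfolding za(1) using power_mean_shift_le_exp[OF z, of m "card S" "card V"] i fin S
    by (intro divide_right_mono) (auto intro: card_mono)
  also have "\<dots> = real m ^ card V * exp ((z - 1) * real (card S) / real m - a * ln z)"
    by (simp add: exp_diff)
  finally show ?thesis unfolding F_def .
qed

lemma card_funcs_class_too_large:
  fixes S :: "'a set" and x :: real
  assumes fin: "finite V" and S: "S \<subseteq> V" and i: "i < m" and x: "0 < x"
  shows "real (card {f\<in>PiE V (\<lambda>_. {..<m}). real (card {u\<in>S. f u = i}) > (1 + x) * real (card S) / real m})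
         \<le> real m ^ card V * exp (- ((1 + x) * ln (1 + x) - x) * real (card S) / real m)"
proof -
  have "real (card {f\<in>PiE V (\<lambda>_. {..<m}). real (card {u\<in>S. f u = i}) > (1 + x) * real (card S) / real m})
     \<le> real m ^ card V * exp ((1 + x - 1) * real (card S) / real m - (1 + x) * real (card S) / real m * ln (1 + x))"
  proof (rule card_funcs_exponential_moment[OF fin S i])
    show "0 < 1 + x" using x by simp
    fix f :: "'a \<Rightarrow> nat" assume "(1 + x) * real (card S) / real m < real (card {u\<in>S. f u = i})"
    then have "(1 + x) powr ((1 + x) * real (card S) / real m) \<le> (1 + x) powr real (card {u\<in>S. f u = i})"
      using x by (intro powr_mono) auto
    then show "(1 + x) powr ((1 + x) * real (card S) / real m) \<le> (1 + x) ^ card {u\<in>S. f u = i}"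
      using x by (simp add: powr_realpow)
  qed
  also have "(1 + x - 1) * real (card S) / real m - (1 + x) * real (card S) / real m * ln (1 + x)
      = - ((1 + x) * ln (1 + x) - x) * real (card S) / real m" using i by (simp add: field_simps)
  finally show ?thesis .
qed

lemma card_funcs_class_too_small:
  fixes S :: "'a set" and x :: real
  assumes fin: "finite V" and S: "S \<subseteq> V" and i: "i < m" and x: "0 < x" "x < 1"
  shows "real (card {f\<in>PiE V (\<lambda>_. {..<m}). real (card {u\<in>S. f u = i}) < (1 - x) * real (card S) / real m})
         \<le> real m ^ card V * exp (- (x + (1 - x) * ln (1 - x)) * real (card S) / real m)"
proof -
  have "real (card {f\<in>PiE V (\<lambda>_. {..<m}). real (card {u\<in>S. f u = i}) < (1 - x) * real (card S) / real m})
     \<le> real m ^ card V * exp ((1 - x - 1) * real (card S) / real m - (1 - x) * real (card S) / real m * ln (1 - x))"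
  proof (rule card_funcs_exponential_moment[OF fin S i])
    show "0 < 1 - x" using x by simp
    fix f :: "'a \<Rightarrow> nat" assume "real (card {u\<in>S. f u = i}) < (1 - x) * real (card S) / real m"
    then have "(1 - x) powr ((1 - x) * real (card S) / real m) \<le> (1 - x) powr real (card {u\<in>S. f u = i})"
      using x by (intro powr_mono') auto
    then show "(1 - x) powr ((1 - x) * real (card S) / real m) \<le> (1 - x) ^ card {u\<in>S. f u = i}"
      using x by (simp add: powr_realpow)
  qed
  also have "(1 - x - 1) * real (card S) / real m - (1 - x) * real (card S) / real m * ln (1 - x)
      = - (x + (1 - x) * ln (1 - x)) * real (card S) / real m" using i by (simp add: field_simps)
  finally show ?thesis .
qed

lemma ln_less_minus_one: "0 < y \<Longrightarrow> y \<noteq> 1 \<Longrightarrow> ln y < y - (1::real)"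
  using ln_le_minus_one ln_eq_minus_one by (metis order_le_less)

lemma chernoff_exponent_upper_pos: "0 < x \<Longrightarrow> 0 < (1 + x) * ln (1 + x) - (x::real)"
proof -
  assume x: "0 < x"
  have "ln (1 / (1 + x)) < 1 / (1 + x) - 1" using x by (intro ln_less_minus_one) auto
  then have "x / (1 + x) < ln (1 + x)" using x by (simp add: ln_div field_simps)
  then show ?thesis using x by (simp add: field_simps)
qed

lemma chernoff_exponent_lower_pos: "0 < x \<Longrightarrow> x < 1 \<Longrightarrow> 0 < x + (1 - x) * ln (1 - (x::real))"
proof -
  assume x: "0 < x" "x < 1"
  have "ln (1 / (1 - x)) < 1 / (1 - x) - 1" using x by (intro ln_less_minus_one) auto
  then have "- ln (1 - x) * (1 - x) < x" using x by (simp add: ln_div field_simps)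
  then show ?thesis by (simp add: algebra_simps)
qed

definition unbalanced :: "nat \<Rightarrow> real \<Rightarrow> ('a \<Rightarrow> nat) \<Rightarrow> 'a set \<Rightarrow> bool" where
  "unbalanced m x f S \<longleftrightarrow> (\<exists>i<m. real (card {u\<in>S. f u = i}) > (1 + x) * real (card S) / real m
                              \<or> real (card {u\<in>S. f u = i}) < (1 - x) * real (card S) / real m)"

definition chernoff_rate :: "real \<Rightarrow> real" where
  "chernoff_rate x = min ((1 + x) * ln (1 + x) - x) (x + (1 - x) * ln (1 - x))"

lemma chernoff_rate_pos: "0 < x \<Longrightarrow> x < 1 \<Longrightarrow> 0 < chernoff_rate x"
  unfolding chernoff_rate_def using chernoff_exponent_upper_pos chernoff_exponent_lower_pos by auto

lemma card_unbalanced_funcs: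
  fixes S :: "'a set" and x s :: real
  assumes fin: "finite V" and S: "S \<subseteq> V" and m: "m \<ge> 1" and x: "0 < x" "x < 1"
    and s: "s \<le> real (card S)"
  shows "real (card {f\<in>PiE V (\<lambda>_. {..<m}). unbalanced m x f S})
         \<le> real m ^ card V * (2 * real m * exp (- chernoff_rate x * s / real m))"
proof -
  define F where "F = PiE V (\<lambda>_. {..<m})"
  define bound where "bound = real m ^ card V * exp (- chernoff_rate x * s / real m)"
  define U where "U = (\<lambda>i. {f\<in>F. real (card {u\<in>S. f u = i}) > (1 + x) * real (card S) / real m})"
  define L where "L = (\<lambda>i. {f\<in>F. real (card {u\<in>S. f u = i}) < (1 - x) * real (card S) / real m})"
  have weaken: "real m ^ card V * exp (- c * real (card S) / real m) \<le> bound"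
    if "chernoff_rate x \<le> c" for c
  proof -
    have "chernoff_rate x * s \<le> chernoff_rate x * real (card S)"
      using chernoff_rate_pos[OF x] s by simp
    also have "\<dots> \<le> c * real (card S)" using that by (simp add: mult_right_mono)
    finally show ?thesis
      unfolding bound_def using m by (intro mult_left_mono) (auto simp: divide_right_mono)
  qed
  have "real (card (U i)) \<le> bound" if "i < m" for i
    using card_funcs_class_too_large[OF fin S that x(1)] weaken[of "(1 + x) * ln (1 + x) - x"]
    unfolding U_def F_def chernoff_rate_def by simp
  moreover have "real (card (L i)) \<le> bound" if "i < m" for i
    using card_funcs_class_too_small[OF fin S that x] weaken[of "x + (1 - x) * ln (1 - x)"]
    unfolding L_def F_def chernoff_rate_def by simp
  ultimately have UL: "real (card (U i \<union> L i)) \<le> 2 * bound" if "i < m" for i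
    using card_Un_le[of "U i" "L i"] that by fastforce
  have "finite F" unfolding F_def using fin by (simp add: finite_PiE)
  then have "card {f\<in>F. unbalanced m x f S} \<le> card (\<Union>i<m. U i \<union> L i)"
    unfolding unbalanced_def U_def L_def by (intro card_mono) auto
  also have "\<dots> \<le> (\<Sum>i<m. card (U i \<union> L i))" by (rule card_UN_le) simp
  finally have "real (card {f\<in>F. unbalanced m x f S}) \<le> (\<Sum>i<m. real (card (U i \<union> L i)))"
    by (simp flip: of_nat_sum)
  also have "\<dots> \<le> (\<Sum>i<m. 2 * bound)" using UL by (intro sum_mono) auto
  finally show ?thesis unfolding F_def bound_def by (simp add: mult_ac)
qed

text \<open>First-moment argument over all colourings f.\<close>
lemma exists_partition_few_unbalanced:
  fixes Sv :: "'b \<Rightarrow> 'a set" and x s :: real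
  assumes fin: "finite V" "finite Vg" and S: "\<And>v. v \<in> Vg \<Longrightarrow> Sv v \<subseteq> V" and m: "m \<ge> 1"
    and x: "0 < x" "x < 1" and s: "\<And>v. v \<in> Vg \<Longrightarrow> s \<le> real (card (Sv v))"
  shows "\<exists>f\<in>PiE V (\<lambda>_. {..<m}). real (card {v\<in>Vg. unbalanced m x f (Sv v)})
            \<le> real (card Vg) * (2 * real m * exp (- chernoff_rate x * s / real m))"
proof (rule ccontr)
  define F where "F = PiE V (\<lambda>_. {..<m})"
  define \<delta> where "\<delta> = 2 * real m * exp (- chernoff_rate x * s / real m)"
  assume "\<not> ?thesis"
  then have many: "\<forall>f\<in>F. real (card Vg) * \<delta> < real (card {v\<in>Vg. unbalanced m x f (Sv v)})"
    unfolding F_def \<delta>_def by auto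
  have "finite F" unfolding F_def using fin by (simp add: finite_PiE)
  have "card F = m ^ card V" unfolding F_def using fin by (simp add: card_PiE)
  have "{..<m} \<noteq> {}" using m by (simp add: lessThan_empty_iff)
  then have "F \<noteq> {}" unfolding F_def by (simp add: PiE_eq_empty_iff)
  then have "(\<Sum>f\<in>F. real (card Vg) * \<delta>) < (\<Sum>f\<in>F. real (card {v\<in>Vg. unbalanced m x f (Sv v)}))"
    using \<open>finite F\<close> many by (intro sum_strict_mono) auto
  also have "\<dots> = real (\<Sum>f\<in>F. card {v\<in>Vg. unbalanced m x f (Sv v)})" by simp
  also have "(\<Sum>f\<in>F. card {v\<in>Vg. unbalanced m x f (Sv v)}) = (\<Sum>v\<in>Vg. card {f\<in>F. unbalanced m x f (Sv v)})"
    using double_counting[OF \<open>finite F\<close> fin(2)] .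
  also have "real \<dots> = (\<Sum>v\<in>Vg. real (card {f\<in>F. unbalanced m x f (Sv v)}))" by simp
  also have "\<dots> \<le> (\<Sum>v\<in>Vg. real m ^ card V * \<delta>)"
    unfolding F_def \<delta>_def using card_unbalanced_funcs[OF fin(1) S m x s] by (intro sum_mono) auto
  also have "\<dots> = (\<Sum>f\<in>F. real (card Vg) * \<delta>)" using \<open>card F = m ^ card V\<close> by simp
  finally show False by simp
qed

section \<open>Paths along a chain of matchings\<close>

fun walk :: "(nat \<Rightarrow> 'a \<Rightarrow> 'a) \<Rightarrow> 'a \<Rightarrow> nat \<Rightarrow> 'a" where
  "walk g v 0 = v"
| "walk g v (Suc j) = g j (walk g v j)"

locale matching_chain =
  fixes P A :: "nat \<Rightarrow> 'a set" and g :: "nat \<Rightarrow> 'a \<Rightarrow> 'a" and E :: "'a \<Rightarrow> 'a \<Rightarrow> bool"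
  assumes parts_disjoint: "\<And>i j. i \<noteq> j \<Longrightarrow> P i \<inter> P j = {}"
    and finite_part: "\<And>i. finite (P i)"
    and matched_subset: "\<And>i. A i \<subseteq> P i"
    and inj_matching: "\<And>i. inj_on (g i) (A i)"
    and matching_edge: "\<And>i x. x \<in> A i \<Longrightarrow> g i x \<in> P (Suc i) \<and> E x (g i x)"
begin

definition survivors :: "nat \<Rightarrow> 'a set" where
  "survivors j = {v\<in>P 0. \<forall>i<j. walk g v i \<in> A i}"

lemma walk_in_part: "v \<in> P 0 \<Longrightarrow> \<forall>i<j. walk g v i \<in> A i \<Longrightarrow> walk g v j \<in> P j"
  by (induction j) (use matching_edge in auto)

lemma survivors_antimono: "i \<le> j \<Longrightarrow> survivors j \<subseteq> survivors i"
  unfolding survivors_def by auto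

lemma walk_survivor_in_part: "v \<in> survivors j \<Longrightarrow> i \<le> j \<Longrightarrow> walk g v i \<in> P i"
  using walk_in_part[of v i] unfolding survivors_def by auto

lemma inj_on_walk_survivors: "inj_on (\<lambda>v. walk g v j) (survivors j)"
proof (induction j)
  case (Suc j)
  show ?case
  proof (rule inj_onI)
    fix v w assume v: "v \<in> survivors (Suc j)" and w: "w \<in> survivors (Suc j)"
      and eq: "walk g v (Suc j) = walk g w (Suc j)"
    have "walk g v j \<in> A j" "walk g w j \<in> A j" using v w unfolding survivors_def by auto
    then have "walk g v j = walk g w j" using eq inj_matching[of j] by (simp add: inj_on_eq_iff)
    moreover have "v \<in> survivors j" "w \<in> survivors j" using v w survivors_antimono[of j "Suc j"] by auto
    ultimately show "v = w" by (rule inj_onD[OF Suc.IH])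
  qed
qed (simp add: inj_on_def)

text \<open>Each unmatched vertex of P j is hit by the walk of at most one survivor of the first j steps.\<close>
lemma card_part0_le_survivors: "card (P 0) \<le> card (survivors j) + (\<Sum>i<j. card (P i - A i))"
proof (induction j)
  case 0
  have "survivors 0 = P 0" unfolding survivors_def by auto
  then show ?case by simp
next
  case (Suc j)
  have fin: "finite (survivors j)" unfolding survivors_def using finite_part by auto
  have sub: "survivors (Suc j) \<subseteq> survivors j" using survivors_antimono by auto
  have "(\<lambda>v. walk g v j) ` (survivors j - survivors (Suc j)) \<subseteq> P j - A j"
    using walk_survivor_in_part[of _ j j] unfolding survivors_def using less_Suc_eq by auto
  moreover have "inj_on (\<lambda>v. walk g v j) (survivors j - survivors (Suc j))"
    using inj_on_walk_survivors[of j] by (rule inj_on_subset) auto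
  ultimately have "card (survivors j - survivors (Suc j)) \<le> card (P j - A j)"
    using finite_part[of j] by (metis card_image card_mono finite_Diff)
  moreover have "card (survivors j) = card (survivors (Suc j)) + card (survivors j - survivors (Suc j))"
    using fin sub by (metis card_Diff_subset card_mono finite_subset le_add_diff_inverse)
  ultimately show ?case using Suc.IH by simp
qed

lemma walk_path:
  assumes "m \<ge> 1" and "\<forall>i<m. P i \<subseteq> W" and v: "v \<in> survivors (m - 1)"
  shows "is_path_in E W (map (walk g v) [0..<m])"
proof -
  have in_part: "walk g v i \<in> P i" if "i < m" for i
    using walk_survivor_in_part[OF v] that by simp
  have "inj_on (walk g v) {0..<m}"
    using in_part parts_disjoint by (intro inj_onI) (metis IntI atLeastLessThan_iff emptyE)
  moreover have "set (map (walk g v) [0..<m]) \<subseteq> W" using in_part assms(2) by fastforce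
  moreover have "E (walk g v i) (walk g v (Suc i))" if "i + 1 < m" for i
    using v that matching_edge unfolding survivors_def by simp
  ultimately show ?thesis using assms(1) unfolding is_path_in_def by (simp add: distinct_map)
qed

lemma walk_paths_disjoint:
  assumes v: "v \<in> survivors (m - 1)" and w: "w \<in> survivors (m - 1)" and "v \<noteq> w"
  shows "set (map (walk g v) [0..<m]) \<inter> set (map (walk g w) [0..<m]) = {}"
proof (rule ccontr)
  assume "set (map (walk g v) [0..<m]) \<inter> set (map (walk g w) [0..<m]) \<noteq> {}"
  then obtain i j where ij: "i < m" "j < m" "walk g v i = walk g w j" by auto
  then have "walk g v i \<in> P i" "walk g w j \<in> P j"
    using walk_survivor_in_part[OF v, of i] walk_survivor_in_part[OF w, of j] by auto
  then have "walk g v i \<in> P i \<inter> P j" using ij(3) by simp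
  then have "i = j" using parts_disjoint by blast
  moreover have "v \<in> survivors i" "w \<in> survivors i"
    using v w survivors_antimono[of i "m - 1"] ij(1) by (simp_all add: subset_iff)
  ultimately have "v = w" using ij(3) inj_on_walk_survivors[of i] by (simp add: inj_on_def)
  then show False using \<open>v \<noteq> w\<close> by simp
qed

lemma exists_disjoint_walk_paths:
  assumes "m \<ge> 1" and W: "\<forall>i<m. P i \<subseteq> W" and t: "t \<le> card (survivors (m - 1))"
  shows "\<exists>Ps. length Ps = t
    \<and> (\<forall>Q\<in>set Ps. is_path_in E W Q \<and> length Q = m \<and> hd Q \<in> P 0 \<and> last Q \<in> P (m - 1))
    \<and> (\<forall>i<t. \<forall>j<t. i \<noteq> j \<longrightarrow> set (Ps ! i) \<inter> set (Ps ! j) = {})"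
proof -
  have "finite (survivors (m - 1))" unfolding survivors_def using finite_part by auto
  then obtain xs where xs: "set xs = survivors (m - 1)" "distinct xs"
    using finite_distinct_list by blast
  define starts where "starts = take t xs"
  have starts: "length starts = t" "distinct starts" "set starts \<subseteq> survivors (m - 1)"
    unfolding starts_def using t xs distinct_card[OF xs(2)] by (auto dest: in_set_takeD)
  define Ps where "Ps = map (\<lambda>v. map (walk g v) [0..<m]) starts"
  have "is_path_in E W Q \<and> length Q = m \<and> hd Q \<in> P 0 \<and> last Q \<in> P (m - 1)" if Q: "Q \<in> set Ps" for Q
  proof -
    obtain v where v: "v \<in> survivors (m - 1)" "Q = map (walk g v) [0..<m]"
      using Q starts(3) unfolding Ps_def by auto
    then show ?thesis
      using walk_path[OF assms(1) W v(1)] walk_survivor_in_part[OF v(1), of 0]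
        walk_survivor_in_part[OF v(1), of "m - 1"] assms(1)
      by (simp add: hd_map last_map)
  qed
  moreover have "set (Ps ! i) \<inter> set (Ps ! j) = {}" if "i < t" "j < t" "i \<noteq> j" for i j
  proof -
    have "starts ! i \<noteq> starts ! j" using starts(1,2) that by (simp add: nth_eq_iff_index_eq)
    moreover have "starts ! i \<in> survivors (m - 1)" "starts ! j \<in> survivors (m - 1)"
      using starts that by (metis nth_mem subsetD)+
    ultimately show ?thesis using walk_paths_disjoint that starts(1) unfolding Ps_def by simp
  qed
  moreover have "length Ps = t" unfolding Ps_def using starts(1) by simp
  ultimately show ?thesis by blast
qed

end

section \<open>Colouring a near-regular vertex set\<close>

lemma dG_mono: "finite Y \<Longrightarrow> X \<subseteq> Y \<Longrightarrow> dG E v X \<le> dG E v Y"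
  unfolding dG_def by (intro card_mono) auto

text \<open>Here M = m, n = |V(G)|, N = |V|, B and R count the bad and the removed vertices, and V0 and P0
  are the sizes of colour class 0 before and after the removal.\<close>
lemma path_budget_arith:
  fixes M x \<epsilon> n N R B V0 P0 t :: real
  assumes M: "M \<ge> 1" and x: "0 < x" "x \<le> 1/16" and \<epsilon>: "0 < \<epsilon>" and nonneg: "N \<ge> 0" "R \<ge> 0" "B \<ge> 0"
    and P0: "V0 \<le> P0 + R"
    and V0: "(N - B) * (1 - 3 * x) \<le> M * V0"
    and B: "B \<le> R"
    and t: "M * t \<le> (1 - \<epsilon> + 2 * x) * N + M"
    and R: "(2 * M ^ 3 + 2 * M) * R \<le> n * \<epsilon> / 16"
    and n_large: "M ^ 2 + M \<le> n * \<epsilon> / 16"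
    and n: "n \<le> 4 * N"
    and x_eps: "x * (5 + 4 * M ^ 2) \<le> \<epsilon> / 2"
  shows "t + M * (4 * x * N + 2 * M * R + 1) \<le> P0"
proof -
  have "B * (1 - 3 * x) \<le> B" using nonneg x by (simp add: mult_left_le)
  moreover have "x * (5 + 4 * M ^ 2) * N \<le> \<epsilon> / 2 * N" using mult_right_mono[OF x_eps nonneg(1)] .
  moreover have "M * V0 \<le> M * P0 + M * R" using mult_left_mono[OF P0, of M] M by (simp add: algebra_simps)
  moreover have "R \<le> M * R" using M nonneg by (simp add: mult_le_cancel_right1)
  moreover have "\<epsilon> * n \<le> \<epsilon> * (4 * N)" using n \<epsilon> by simp
  ultimately have "M * (t + M * (4 * x * N + 2 * M * R + 1)) \<le> M * P0"
    using t V0 B R n_large by (simp add: algebra_simps power2_eq_square power3_eq_cube)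
  then show ?thesis using M by simp
qed

lemma ceiling_path_count_bound:
  fixes \<epsilon> q x \<gamma> n N :: real
  assumes "1 \<le> m" "0 < \<epsilon>" "\<epsilon> \<le> 1" "0 \<le> q" "0 \<le> n" "0 < \<gamma>" "\<gamma> \<le> x" "x \<le> 1/16"
    and N: "(1 - \<gamma>) * (q * n) \<le> N"
  shows "real m * real (nat \<lceil>(1 - \<epsilon>) * q * n / real m\<rceil>) \<le> (1 - \<epsilon> + 2 * x) * N + real m"
proof -
  define a where "a = (1 - \<epsilon>) * q * n"
  have "0 \<le> a / real m" unfolding a_def using assms by simp
  then have "real (nat \<lceil>a / real m\<rceil>) = real_of_int \<lceil>a / real m\<rceil>" by simp
  then have "real (nat \<lceil>a / real m\<rceil>) \<le> a / real m + 1" by linarith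
  then have "real m * real (nat \<lceil>a / real m\<rceil>) \<le> a + real m"
    using assms(1) by (simp add: field_simps)
  moreover have "a * (1 - \<gamma>) \<le> (1 - \<epsilon> + 2 * x) * N * (1 - \<gamma>)"
  proof -
    have "a * (1 - \<gamma>) = (1 - \<epsilon>) * ((1 - \<gamma>) * (q * n))" unfolding a_def by (simp add: mult_ac)
    also have "\<dots> \<le> (1 - \<epsilon>) * N" using N assms(3) by (intro mult_left_mono) auto
    also have "\<dots> \<le> (1 - \<epsilon> + 2 * x) * (1 - \<gamma>) * N"
    proof -
      have "\<gamma> * (1 - \<epsilon> + 2 * x) \<le> x * 2" by (rule mult_mono) (use assms in auto)
      then have "1 - \<epsilon> \<le> (1 - \<epsilon> + 2 * x) * (1 - \<gamma>)" by (simp add: algebra_simps)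
      moreover have "0 \<le> (1 - \<gamma>) * (q * n)" using assms by simp
      then have "0 \<le> N" using N by linarith
      ultimately show ?thesis by (intro mult_right_mono)
    qed
    finally show ?thesis by (simp add: mult_ac)
  qed
  then have "a \<le> (1 - \<epsilon> + 2 * x) * N" using assms(6-8) by simp
  ultimately show ?thesis unfolding a_def by linarith
qed

locale near_regular_set =
  fixes Vg :: "'a set" and E :: "'a \<Rightarrow> 'a \<Rightarrow> bool" and V :: "'a set"
    and m :: nat and x \<gamma> q d :: real
  assumes graph: "simple_graph Vg E"
    and max_degree: "\<And>v. v \<in> Vg \<Longrightarrow> real (dG E v Vg) \<le> d"
    and V_subset: "V \<subseteq> Vg"
    and degree_into_V: "\<And>v. v \<in> Vg \<Longrightarrow> pm_approx (real (dG E v V)) \<gamma> (q * d)"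
    and m_pos: "1 \<le> m" and x_pos: "0 < x" and x_small: "x \<le> 1/16"
    and \<gamma>_pos: "0 < \<gamma>" and \<gamma>_le_x: "\<gamma> \<le> x" and q_ge: "1/2 \<le> q" and d_ge: "1 \<le> d"
begin

definition nbhd :: "'a \<Rightarrow> 'a set" where
  "nbhd v = {u\<in>V. E v u}"

definition deg_hi :: real where
  "deg_hi = (1 + x) * (1 + \<gamma>) * (q * d) / real m"

definition deg_lo :: real where
  "deg_lo = (1 - x) * (1 - \<gamma>) * (q * d) / real m"

lemma finite_Vg: "finite Vg" and finite_V: "finite V"
  using graph V_subset finite_subset unfolding simple_graph_def by auto

lemma edge_sym: "E u v \<Longrightarrow> E v u"
  using graph unfolding simple_graph_def by auto

lemma edge_sym_iff: "E u v \<longleftrightarrow> E v u"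
  using edge_sym by blast

lemma card_nbhd: "v \<in> Vg \<Longrightarrow> (1 - \<gamma>) * (q * d) \<le> real (card (nbhd v)) \<and> real (card (nbhd v)) \<le> (1 + \<gamma>) * (q * d)"
  using degree_into_V unfolding pm_approx_def dG_def nbhd_def by simp

lemma card_nbhd_le_d: "v \<in> Vg \<Longrightarrow> real (card (nbhd v)) \<le> d"
  using max_degree[of v] dG_mono[OF finite_Vg V_subset, of E v] unfolding dG_def nbhd_def by simp

lemma quarter_le_q: "1/4 \<le> (1 - \<gamma>) * q"
proof -
  have "(15/16) * (1/2) \<le> (1 - \<gamma>) * q"
    using \<gamma>_le_x x_small q_ge by (intro mult_mono) auto
  then show ?thesis by simp
qed

lemma card_nbhd_ge_quarter_d:
  assumes "v \<in> Vg" shows "d / 4 \<le> real (card (nbhd v))"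
proof -
  have "(1/4) * d \<le> ((1 - \<gamma>) * q) * d"
    using quarter_le_q d_ge by (intro mult_right_mono) auto
  also have "\<dots> = (1 - \<gamma>) * (q * d)" by (simp add: mult_ac)
  finally show ?thesis using card_nbhd[OF assms] by linarith
qed

lemma deg_hi_pos: "0 < deg_hi"
  unfolding deg_hi_def using x_pos \<gamma>_pos q_ge d_ge m_pos by simp

lemma deg_lo_nonneg: "0 \<le> deg_lo"
  unfolding deg_lo_def using x_small \<gamma>_le_x q_ge d_ge m_pos by simp

lemma deg_lo_ge_scaled_deg_hi: "(1 - 4 * x) * deg_hi \<le> deg_lo"
proof -
  have "(1 - 4 * x) * ((1 + x) * (1 + \<gamma>)) \<le> (1 - x) * (1 - \<gamma>)"
  proof -
    have "(1 - x) * (1 - \<gamma>) - (1 - 4 * x) * ((1 + x) * (1 + \<gamma>))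
        = 2 * (x - \<gamma>) + 4 * x * x + 4 * x * \<gamma> + 4 * x * x * \<gamma>" by (simp add: algebra_simps)
    moreover have "0 \<le> 2 * (x - \<gamma>) + 4 * x * x + 4 * x * \<gamma> + 4 * x * x * \<gamma>"
      using x_pos \<gamma>_pos \<gamma>_le_x by simp
    ultimately show ?thesis by linarith
  qed
  moreover have "0 \<le> q * d / real m" using q_ge d_ge by simp
  ultimately show ?thesis
    unfolding deg_hi_def deg_lo_def using mult_right_mono by (fastforce simp: mult_ac)
qed

lemma d_le_deg_hi: "d \<le> 2 * real m * deg_hi"
proof -
  have "1 \<le> (1 + x) * (1 + \<gamma>)" using x_pos \<gamma>_pos by (simp add: algebra_simps)
  then have "1 * (1/2) \<le> (1 + x) * (1 + \<gamma>) * q" using q_ge by (intro mult_mono) auto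
  then have "d * 1 \<le> d * (2 * ((1 + x) * (1 + \<gamma>) * q))" using d_ge by (intro mult_left_mono) auto
  also have "\<dots> = 2 * real m * deg_hi" unfolding deg_hi_def using m_pos by simp
  finally show ?thesis by simp
qed

lemma two_deg_hi_le:
  assumes "v \<in> Vg"
  shows "2 * deg_hi \<le> 4 * d / real m"
proof -
  have q_bound: "q * (1 - \<gamma>) \<le> 1"
  proof -
    have "(1 - \<gamma>) * (q * d) \<le> 1 * d" using card_nbhd[OF assms] card_nbhd_le_d[OF assms] by simp
    then show ?thesis using d_ge by (simp add: mult_ac)
  qed
  have "(1 + x) * (1 + \<gamma>) \<le> 2 * (1 - \<gamma>)"
  proof -
    have "x * \<gamma> \<le> 1 * (1/16)" using x_small \<gamma>_le_x x_pos \<gamma>_pos by (intro mult_mono) auto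
    then show ?thesis using x_small \<gamma>_le_x by (simp add: algebra_simps)
  qed
  then have "(1 + x) * (1 + \<gamma>) * q \<le> 2 * (1 - \<gamma>) * q" using q_ge by (intro mult_right_mono) auto
  also have "\<dots> = 2 * (q * (1 - \<gamma>))" by (simp only: mult_ac)
  also have "\<dots> \<le> 2" using q_bound by simp
  finally have "(1 + x) * (1 + \<gamma>) * q \<le> 2" .
  then have "((1 + x) * (1 + \<gamma>) * q) * d \<le> 2 * d" using d_ge by (intro mult_right_mono) auto
  then have "2 * (((1 + x) * (1 + \<gamma>) * q) * d) \<le> 4 * d" by linarith
  then have "2 * (((1 + x) * (1 + \<gamma>) * q) * d) / real m \<le> 4 * d / real m" by (rule divide_right_mono) simp
  moreover have "2 * deg_hi = 2 * (((1 + x) * (1 + \<gamma>) * q) * d) / real m" unfolding deg_hi_def by (simp add: mult_ac)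
  ultimately show ?thesis by simp
qed

end

locale partitioned_graph = near_regular_set +
  fixes f :: "'a \<Rightarrow> nat"
begin

definition bad :: "'a set" where
  "bad = {v\<in>Vg. unbalanced m x f (nbhd v)}"

text \<open>Removing the bad vertices with their neighbourhoods makes every remaining vertex good and
  non-adjacent to all bad vertices.\<close>
definition removed :: "'a set" where
  "removed = bad \<union> (\<Union>v\<in>bad. nbhd v)"

definition part :: "nat \<Rightarrow> 'a set" where
  "part i = {u\<in>V - removed. f u = i}"

lemma class_degree_bounds:
  assumes "v \<in> Vg" "v \<notin> bad" "i < m"
  shows "deg_lo \<le> real (card {u\<in>nbhd v. f u = i})" and "real (card {u\<in>nbhd v. f u = i}) \<le> deg_hi"
proof -
  have "\<not> unbalanced m x f (nbhd v)" using assms(1,2) by (simp add: bad_def)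
  then have balanced: "(1 - x) * real (card (nbhd v)) / real m \<le> real (card {u\<in>nbhd v. f u = i})
      \<and> real (card {u\<in>nbhd v. f u = i}) \<le> (1 + x) * real (card (nbhd v)) / real m"
    using assms(3) unfolding unbalanced_def by (meson not_less)
  have "deg_lo \<le> (1 - x) * real (card (nbhd v)) / real m"
    unfolding deg_lo_def using card_nbhd[OF assms(1)] x_small m_pos
    by (simp add: mult.assoc divide_right_mono mult_left_mono)
  then show "deg_lo \<le> real (card {u\<in>nbhd v. f u = i})" using balanced by linarith
  have "(1 + x) * real (card (nbhd v)) / real m \<le> deg_hi"
    unfolding deg_hi_def using card_nbhd[OF assms(1)] x_pos m_pos
    by (simp add: mult.assoc divide_right_mono mult_left_mono)
  then show "real (card {u\<in>nbhd v. f u = i}) \<le> deg_hi" using balanced by linarith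
qed

lemma card_removed: "real (card removed) \<le> (1 + d) * real (card bad)"
proof -
  have "finite bad" unfolding bad_def using finite_Vg by simp
  have "card removed \<le> card bad + (\<Sum>b\<in>bad. card (nbhd b))"
    unfolding removed_def
    using card_Un_le[of bad "\<Union>(nbhd ` bad)"] card_UN_le[OF \<open>finite bad\<close>, of nbhd] by linarith
  then have "real (card removed) \<le> real (card bad) + (\<Sum>b\<in>bad. real (card (nbhd b)))"
    by (simp flip: of_nat_sum)
  also have "(\<Sum>b\<in>bad. real (card (nbhd b))) \<le> (\<Sum>b\<in>bad. d)"
    using card_nbhd_le_d unfolding bad_def by (intro sum_mono) auto
  finally show ?thesis by (simp add: algebra_simps)
qed

lemma finite_removed: "finite removed"
  unfolding removed_def bad_def nbhd_def using finite_Vg finite_V by auto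

lemma part_subset: "part i \<subseteq> V" and finite_part: "finite (part i)"
  and parts_disjoint: "i \<noteq> j \<Longrightarrow> part i \<inter> part j = {}"
  unfolding part_def using finite_V by auto

lemma part_good: "u \<in> part i \<Longrightarrow> u \<in> Vg \<and> u \<notin> bad"
  unfolding part_def removed_def using V_subset by auto

lemma part_not_adjacent_bad: "u \<in> part i \<Longrightarrow> b \<in> bad \<Longrightarrow> \<not> E b u"
  unfolding part_def removed_def nbhd_def by auto

lemma part_degree_le:
  assumes "u \<in> part k" "j < m"
  shows "real (card {w\<in>part j. E u w}) \<le> deg_hi"
proof -
  have "card {w\<in>part j. E u w} \<le> card {w\<in>nbhd u. f w = j}"
    using finite_V unfolding part_def nbhd_def by (intro card_mono) auto
  then show ?thesis
    using class_degree_bounds(2)[OF _ _ assms(2)] part_good[OF assms(1)] by fastforce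
qed

lemma part_degree_ge:
  assumes "u \<in> part k" "j < m"
  shows "deg_lo - real (card {w\<in>removed. E u w}) \<le> real (card {w\<in>part j. E u w})"
proof -
  have "{w\<in>nbhd u. f w = j} \<subseteq> {w\<in>part j. E u w} \<union> {w\<in>removed. E u w}"
    unfolding nbhd_def part_def by auto
  then have "card {w\<in>nbhd u. f w = j} \<le> card ({w\<in>part j. E u w} \<union> {w\<in>removed. E u w})"
    using finite_part[of j] finite_removed by (intro card_mono) auto
  also have "\<dots> \<le> card {w\<in>part j. E u w} + card {w\<in>removed. E u w}" by (rule card_Un_le)
  finally show ?thesis
    using class_degree_bounds(1)[OF _ _ assms(2)] part_good[OF assms(1)] by fastforce
qed

lemma sum_degree_into_removed: "(\<Sum>y\<in>part i. real (card {z\<in>removed. E y z})) \<le> d * real (card removed)"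
proof -
  have "(\<Sum>y\<in>part i. card {z\<in>removed. E y z}) = (\<Sum>z\<in>removed. card {y\<in>part i. E y z})"
    by (rule double_counting[OF finite_part finite_removed])
  then have "(\<Sum>y\<in>part i. real (card {z\<in>removed. E y z})) = (\<Sum>z\<in>removed. real (card {y\<in>part i. E y z}))"
    by (simp flip: of_nat_sum)
  also have "\<dots> \<le> (\<Sum>z\<in>removed. d)"
  proof (intro sum_mono)
    fix z assume "z \<in> removed"
    then have "z \<in> Vg" unfolding removed_def bad_def nbhd_def using V_subset by auto
    have "card {y\<in>part i. E y z} \<le> dG E z Vg"
      unfolding dG_def using finite_Vg part_subset V_subset edge_sym by (intro card_mono) auto
    then show "real (card {y\<in>part i. E y z}) \<le> d" using max_degree[OF \<open>z \<in> Vg\<close>] by linarith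
  qed
  finally show ?thesis by (simp add: mult.commute)
qed

lemma sum_part_degrees_ge:
  assumes "j < m"
  shows "real (card (part i)) * deg_lo - d * real (card removed)
    \<le> (\<Sum>y\<in>part i. real (card {z\<in>part j. E y z}))"
proof -
  have "(\<Sum>y\<in>part i. deg_lo - real (card {z\<in>removed. E y z}))
      \<le> (\<Sum>y\<in>part i. real (card {z\<in>part j. E y z}))"
    using part_degree_ge assms by (intro sum_mono) blast
  then show ?thesis using sum_degree_into_removed[of i] by (simp add: sum_subtractf)
qed

text \<open>Consecutive parts span a bipartite graph of maximum degree deg_hi in which almost every
  vertex of part i has degree about deg_lo, so it has an almost perfect matching.\<close>
lemma part_matching:
  assumes "Suc i < m"
  shows "\<exists>A g. A \<subseteq> part i \<and> inj_on g A \<and> (\<forall>y\<in>A. g y \<in> part (Suc i) \<and> E y (g y))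
    \<and> real (card (part i - A)) \<le> 4 * x * real (card V) + 2 * real m * real (card removed) + 1"
proof -
  define p where "p = real (card (part i))"
  have deg_left: "\<forall>y\<in>part i. real (card {z\<in>part (Suc i). E y z}) \<le> deg_hi"
    using part_degree_le assms by blast
  have deg_right: "\<forall>z\<in>part (Suc i). real (card {y\<in>part i. E y z}) \<le> deg_hi"
    using part_degree_le[of _ "Suc i" i] assms by (simp add: edge_sym_iff)
  obtain A g where A: "A \<subseteq> part i" "inj_on g A" "\<forall>y\<in>A. g y \<in> part (Suc i) \<and> E y (g y)"
    and unmatched: "real (card (part i - A))
      \<le> p - (\<Sum>y\<in>part i. real (card {z\<in>part (Suc i). E y z})) / deg_hi + 1"
    using bipartite_large_matching[OF finite_part finite_part deg_hi_pos deg_left deg_right]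
    unfolding p_def by blast
  have "p * deg_lo - d * real (card removed) \<le> (\<Sum>y\<in>part i. real (card {z\<in>part (Suc i). E y z}))"
    using sum_part_degrees_ge[of "Suc i" i] assms unfolding p_def by simp
  then have "real (card (part i - A)) \<le> p - (p * deg_lo - d * real (card removed)) / deg_hi + 1"
    using unmatched deg_hi_pos by (smt (verit) divide_right_mono)
  also have "\<dots> = p * (deg_hi - deg_lo) / deg_hi + d / deg_hi * real (card removed) + 1"
    using deg_hi_pos by (simp add: field_simps)
  also have "\<dots> \<le> p * (4 * x) + 2 * real m * real (card removed) + 1"
  proof -
    have "(deg_hi - deg_lo) / deg_hi \<le> 4 * x"
      using deg_lo_ge_scaled_deg_hi deg_hi_pos by (simp add: divide_le_eq algebra_simps)
    then have "p * (deg_hi - deg_lo) / deg_hi \<le> p * (4 * x)"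
      unfolding p_def by (simp add: mult_left_mono flip: times_divide_eq_right)
    moreover have "d / deg_hi \<le> 2 * real m"
      using d_le_deg_hi deg_hi_pos by (simp add: divide_le_eq)
    ultimately show ?thesis by (smt (verit) mult_right_mono of_nat_0_le_iff)
  qed
  also have "\<dots> \<le> 4 * x * real (card V) + 2 * real m * real (card removed) + 1"
    using card_mono[OF finite_V part_subset[of i]] x_pos unfolding p_def by simp
  finally show ?thesis using A by blast
qed

lemma sum_class0_degrees:
  "(real (card V) - real (card bad)) * deg_lo \<le> real (card {u\<in>V. f u = 0}) * ((1 + \<gamma>) * (q * d))"
proof -
  define V0 where "V0 = {u\<in>V. f u = 0}"
  have "finite V0" unfolding V0_def using finite_V by simp
  have "(\<Sum>u\<in>V0. card (nbhd u)) = (\<Sum>u\<in>V0. card {v\<in>V. E u v})" unfolding nbhd_def by simp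
  also have "\<dots> = (\<Sum>v\<in>V. card {u\<in>V0. E u v})" by (rule double_counting[OF \<open>finite V0\<close> finite_V])
  also have "\<dots> = (\<Sum>v\<in>V. card {u\<in>nbhd v. f u = 0})"
    unfolding V0_def nbhd_def using edge_sym by (intro sum.cong refl arg_cong[where f=card]) auto
  finally have eq: "(\<Sum>u\<in>V0. real (card (nbhd u))) = (\<Sum>v\<in>V. real (card {u\<in>nbhd v. f u = 0}))"
    by (simp flip: of_nat_sum)
  have "(real (card V) - real (card bad)) * deg_lo \<le> real (card (V - bad)) * deg_lo"
    using deg_lo_nonneg diff_card_le_card_Diff[of bad V] finite_Vg
    by (intro mult_right_mono) (auto simp: bad_def)
  also have "\<dots> = (\<Sum>v\<in>V - bad. deg_lo)" by simp
  also have "\<dots> \<le> (\<Sum>v\<in>V - bad. real (card {u\<in>nbhd v. f u = 0}))"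
    using class_degree_bounds(1) V_subset m_pos by (intro sum_mono) auto
  also have "\<dots> \<le> (\<Sum>v\<in>V. real (card {u\<in>nbhd v. f u = 0}))"
    using finite_V by (intro sum_mono2) auto
  also have "\<dots> \<le> (\<Sum>u\<in>V0. (1 + \<gamma>) * (q * d))"
    unfolding eq[symmetric] using card_nbhd V_subset unfolding V0_def by (intro sum_mono) auto
  finally show ?thesis unfolding V0_def by simp
qed

lemma card_class0_lower: "(real (card V) - real (card bad)) * (1 - 3 * x) \<le> real m * real (card {u\<in>V. f u = 0})"
proof (cases "real (card bad) \<le> real (card V)")
  case True
  define K where "K = q * d / real m"
  have "K > 0" unfolding K_def using q_ge d_ge m_pos by simp
  have "(1 - 3 * x) * (1 + \<gamma>) \<le> (1 - x) * (1 - \<gamma>)"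
    using \<gamma>_le_x mult_pos_pos[OF x_pos \<gamma>_pos] by (simp add: algebra_simps)
  then have "(real (card V) - real (card bad)) * ((1 - 3 * x) * (1 + \<gamma>)) * K
      \<le> (real (card V) - real (card bad)) * ((1 - x) * (1 - \<gamma>)) * K"
    using True \<open>K > 0\<close> by (intro mult_right_mono mult_left_mono) auto
  then have "((real (card V) - real (card bad)) * (1 - 3 * x)) * (1 + \<gamma>) * K
      \<le> (real (card V) - real (card bad)) * deg_lo"
    unfolding deg_lo_def K_def by (simp add: mult_ac)
  also have "\<dots> \<le> real (card {u\<in>V. f u = 0}) * ((1 + \<gamma>) * (q * d))" by (rule sum_class0_degrees)
  also have "\<dots> = (real m * real (card {u\<in>V. f u = 0})) * (1 + \<gamma>) * K"
    unfolding K_def using m_pos by simp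
  finally have "((real (card V) - real (card bad)) * (1 - 3 * x)) * ((1 + \<gamma>) * K)
      \<le> (real m * real (card {u\<in>V. f u = 0})) * ((1 + \<gamma>) * K)"
    by (simp only: mult.assoc)
  moreover have "0 < (1 + \<gamma>) * K" using \<open>K > 0\<close> \<gamma>_pos by simp
  ultimately show ?thesis by (rule mult_right_le_imp_le)
next
  case False
  then have "(real (card V) - real (card bad)) * (1 - 3 * x) \<le> 0"
    using x_small by (intro mult_nonpos_nonneg) auto
  moreover have "0 \<le> real m * real (card {u\<in>V. f u = 0})" by simp
  ultimately show ?thesis by linarith
qed

lemma card_class0_le: "card {u\<in>V. f u = 0} \<le> card (part 0) + card removed"
proof -
  have "{u\<in>V. f u = 0} \<subseteq> part 0 \<union> removed" unfolding part_def by auto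
  then show ?thesis using finite_part[of 0] finite_removed card_Un_le[of "part 0" removed]
    by (meson card_mono finite_UnI order_trans)
qed

text \<open>Bad vertices have no neighbours in the parts, good ones at most deg_hi in each.\<close>
lemma endpoint_degree:
  assumes "v \<in> Vg"
  shows "real (card {u\<in>part 0 \<union> part (m - 1). E v u}) \<le> 4 * d / real m"
proof (cases "v \<in> bad")
  case True
  then have "{u\<in>part 0 \<union> part (m - 1). E v u} = {}" using part_not_adjacent_bad by blast
  then show ?thesis using d_ge by (simp only: card.empty) simp
next
  case False
  have "2 * deg_hi \<le> 4 * d / real m" using two_deg_hi_le[OF assms] .
  moreover have "real (card {u\<in>part 0 \<union> part (m - 1). E v u})
      \<le> real (card {u\<in>part 0. E v u}) + real (card {u\<in>part (m - 1). E v u})"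
    unfolding Un_iff Collect_disj_eq conj_disj_distribR of_nat_add[symmetric] of_nat_le_iff by (rule card_Un_le)
  moreover have part_deg: "real (card {u\<in>part j. E v u}) \<le> deg_hi" if "j < m" for j
  proof -
    have "card {u\<in>part j. E v u} \<le> card {u\<in>nbhd v. f u = j}"
      using finite_V unfolding part_def nbhd_def by (intro card_mono) auto
    then show ?thesis using class_degree_bounds(2)[OF assms False that] by linarith
  qed
  moreover have "real (card {u\<in>part 0. E v u}) \<le> deg_hi" "real (card {u\<in>part (m - 1). E v u}) \<le> deg_hi"
    using part_deg m_pos by auto
  ultimately show ?thesis by linarith
qed

lemma exists_disjoint_paths:
  assumes t: "real t + real m * (4 * x * real (card V) + 2 * real m * real (card removed) + 1)
    \<le> real (card (part 0))"
  shows "\<exists>Ps. length Ps = t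
    \<and> (\<forall>Q\<in>set Ps. is_path_in E V Q \<and> length Q = m \<and> hd Q \<in> part 0 \<and> last Q \<in> part (m - 1))
    \<and> (\<forall>i<t. \<forall>j<t. i \<noteq> j \<longrightarrow> set (Ps ! i) \<inter> set (Ps ! j) = {})"
proof -
  define loss where "loss = 4 * x * real (card V) + 2 * real m * real (card removed) + 1"
  have "\<exists>A g. A \<subseteq> part i \<and> inj_on g A \<and> (\<forall>y\<in>A. g y \<in> part (Suc i) \<and> E y (g y))
      \<and> (Suc i < m \<longrightarrow> real (card (part i - A)) \<le> loss)" for i
    using part_matching[of i] unfolding loss_def by (cases "Suc i < m") auto
  then obtain A g where A: "\<And>i. A i \<subseteq> part i" "\<And>i. inj_on (g i) (A i)"
      "\<And>i y. y \<in> A i \<Longrightarrow> g i y \<in> part (Suc i) \<and> E y (g i y)"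
      "\<And>i. Suc i < m \<Longrightarrow> real (card (part i - A i)) \<le> loss"
    by metis
  interpret matching_chain part A g E
    using parts_disjoint finite_part A(1-3) by unfold_locales auto
  have "real (\<Sum>i<m - 1. card (part i - A i)) \<le> (\<Sum>i<m - 1. loss)"
    unfolding of_nat_sum using A(4) by (intro sum_mono) auto
  also have "\<dots> \<le> real m * loss"
    using x_pos unfolding loss_def by (simp add: mult_right_mono)
  finally have "real (card (part 0)) \<le> real (card (survivors (m - 1))) + real m * loss"
    using card_part0_le_survivors[of "m - 1"] by linarith
  then have "t \<le> card (survivors (m - 1))" using t unfolding loss_def by linarith
  then show ?thesis using exists_disjoint_walk_paths[OF m_pos] part_subset by blast
qed

lemma exists_disjoint_paths_few_endpoint_neighbours:
  assumes "real t + real m * (4 * x * real (card V) + 2 * real m * real (card removed) + 1)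
    \<le> real (card (part 0))"
  shows "\<exists>Ps. length Ps = t \<and> (\<forall>P\<in>set Ps. is_path_in E V P \<and> length P = m)
    \<and> (\<forall>i<t. \<forall>j<t. i \<noteq> j \<longrightarrow> set (Ps ! i) \<inter> set (Ps ! j) = {})
    \<and> (\<forall>v\<in>Vg. real (dG E v ((\<lambda>P. hd P) ` set Ps \<union> (\<lambda>P. last P) ` set Ps)) \<le> 4 * d / real m)"
proof -
  obtain Ps where Ps: "length Ps = t"
      "\<forall>Q\<in>set Ps. is_path_in E V Q \<and> length Q = m \<and> hd Q \<in> part 0 \<and> last Q \<in> part (m - 1)"
      "\<forall>i<t. \<forall>j<t. i \<noteq> j \<longrightarrow> set (Ps ! i) \<inter> set (Ps ! j) = {}"
    using exists_disjoint_paths[OF assms] by blast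
  have "real (dG E v ((\<lambda>P. hd P) ` set Ps \<union> (\<lambda>P. last P) ` set Ps)) \<le> 4 * d / real m" if "v \<in> Vg" for v
  proof -
    have "dG E v ((\<lambda>P. hd P) ` set Ps \<union> (\<lambda>P. last P) ` set Ps) \<le> card {u\<in>part 0 \<union> part (m - 1). E v u}"
      unfolding dG_def using Ps(2) finite_part by (intro card_mono) auto
    then show ?thesis using endpoint_degree[OF that] by linarith
  qed
  then show ?thesis using Ps by auto
qed

lemma path_budget:
  assumes \<epsilon>: "0 < \<epsilon>" "\<epsilon> \<le> 1" and x_\<epsilon>: "x * (5 + 4 * real m ^ 2) \<le> \<epsilon> / 2"
    and d_poly: "64 * (real m ^ 2 + real m) / \<epsilon> \<le> d"
    and few_bad: "(2 * real m ^ 3 + 2 * real m) * (1 + d) * real (card bad) \<le> real (card Vg) * \<epsilon> / 16"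
    and size: "pm_approx (real (card V)) \<gamma> (q * real (card Vg))"
    and "Vg \<noteq> {}"
  shows "real (nat \<lceil>(1 - \<epsilon>) * q * real (card Vg) / real m\<rceil>)
      + real m * (4 * x * real (card V) + 2 * real m * real (card removed) + 1) \<le> real (card (part 0))"
proof -
  define n where "n = real (card Vg)"
  define N where "N = real (card V)"
  obtain v0 where "v0 \<in> Vg" using \<open>Vg \<noteq> {}\<close> by blast
  have "(2 * real m ^ 3 + 2 * real m) * real (card removed)
      \<le> (2 * real m ^ 3 + 2 * real m) * ((1 + d) * real (card bad))"
    using card_removed by (intro mult_left_mono) auto
  then have R: "(2 * real m ^ 3 + 2 * real m) * real (card removed) \<le> n * \<epsilon> / 16"
    using few_bad unfolding n_def by (simp add: mult_ac)
  have "d / 4 \<le> N" using card_nbhd_ge_quarter_d[OF \<open>v0 \<in> Vg\<close>] card_mono[OF finite_V, of "nbhd v0"]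
    unfolding N_def nbhd_def by fastforce
  moreover have "N \<le> n" unfolding N_def n_def using card_mono[OF finite_Vg V_subset] by simp
  ultimately have "d * \<epsilon> \<le> (4 * n) * \<epsilon>" by (intro mult_right_mono) (use \<epsilon> in auto)
  moreover have "64 * (real m ^ 2 + real m) \<le> d * \<epsilon>" using d_poly \<epsilon> by (simp add: divide_le_eq)
  ultimately have n_large: "real m ^ 2 + real m \<le> n * \<epsilon> / 16" by simp
  have N_ge: "(1 - \<gamma>) * (q * n) \<le> N" using size unfolding pm_approx_def N_def n_def by simp
  have n_le: "n \<le> 4 * N"
    using N_ge mult_right_mono[OF quarter_le_q, of n] unfolding n_def by (simp add: mult_ac)
  have t_bound: "real m * real (nat \<lceil>(1 - \<epsilon>) * q * n / real m\<rceil>) \<le> (1 - \<epsilon> + 2 * x) * N + real m"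
    using ceiling_path_count_bound[OF m_pos \<epsilon> _ _ \<gamma>_pos \<gamma>_le_x x_small N_ge] q_ge unfolding n_def by simp
  have B_le_R: "real (card bad) \<le> real (card removed)"
    using card_mono[OF finite_removed, of bad] unfolding removed_def by simp
  have "real (card {u\<in>V. f u = 0}) \<le> real (card (part 0) + card removed)"
    using card_class0_le by (simp only: of_nat_le_iff)
  then have P0: "real (card {u\<in>V. f u = 0}) \<le> real (card (part 0)) + real (card removed)" by simp
  have "real (nat \<lceil>(1 - \<epsilon>) * q * n / real m\<rceil>) + real m * (4 * x * N + 2 * real m * real (card removed) + 1)
      \<le> real (card (part 0))"
    by (rule path_budget_arith[OF _ x_pos x_small \<epsilon>(1) _ _ _ P0 card_class0_lower[folded N_def]
          B_le_R t_bound R n_large n_le x_\<epsilon>]) (use m_pos in \<open>auto simp: N_def\<close>)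
  then show ?thesis unfolding n_def N_def .
qed

end

lemma exists_disjoint_paths_near_regular_set:
  fixes m :: nat and \<epsilon> x \<gamma> q d :: real and Vg V :: "'a set" and E :: "'a \<Rightarrow> 'a \<Rightarrow> bool"
  assumes m: "1 \<le> m" and \<epsilon>: "0 < \<epsilon>" "\<epsilon> \<le> 1"
    and x: "0 < x" "x \<le> 1/16" "x * (5 + 4 * real m ^ 2) \<le> \<epsilon> / 2"
    and \<gamma>: "0 < \<gamma>" "\<gamma> \<le> x" and q: "1/2 \<le> q" and d: "1 \<le> d"
    and d_poly: "64 * (real m ^ 2 + real m) / \<epsilon> \<le> d"
    and d_exp: "(2 * real m ^ 3 + 2 * real m) * (1 + d)
      * (2 * real m * exp (- chernoff_rate x * (d / 4) / real m)) \<le> \<epsilon> / 16"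
    and graph: "simple_graph Vg E" and max_deg: "\<forall>v\<in>Vg. real (dG E v Vg) \<le> d" and V: "V \<subseteq> Vg"
    and size: "pm_approx (real (card V)) \<gamma> (q * real (card Vg))"
    and degrees: "\<forall>v\<in>Vg. pm_approx (real (dG E v V)) \<gamma> (q * d)"
  shows "\<exists>Ps. length Ps = nat \<lceil>(1 - \<epsilon>) * q * real (card Vg) / real m\<rceil>
    \<and> (\<forall>P\<in>set Ps. is_path_in E V P \<and> length P = m)
    \<and> (\<forall>i<nat \<lceil>(1 - \<epsilon>) * q * real (card Vg) / real m\<rceil>. \<forall>j<nat \<lceil>(1 - \<epsilon>) * q * real (card Vg) / real m\<rceil>.
         i \<noteq> j \<longrightarrow> set (Ps ! i) \<inter> set (Ps ! j) = {})
    \<and> (\<forall>v\<in>Vg. real (dG E v ((\<lambda>P. hd P) ` set Ps \<union> (\<lambda>P. last P) ` set Ps)) \<le> 4 * d / real m)"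
proof (cases "Vg = {}")
  case True
  then show ?thesis by (intro exI[of _ "[]"]) simp
next
  case False
  interpret near_regular_set Vg E V m x \<gamma> q d
    using graph max_deg V degrees m x \<gamma> q d by unfold_locales auto
  define \<delta> where "\<delta> = 2 * real m * exp (- chernoff_rate x * (d / 4) / real m)"
  obtain f where f: "real (card {v\<in>Vg. unbalanced m x f (nbhd v)}) \<le> real (card Vg) * \<delta>"
    using exists_partition_few_unbalanced[OF finite_V finite_Vg _ m x(1), of nbhd "d / 4"]
      card_nbhd_ge_quarter_d x(2) unfolding \<delta>_def nbhd_def by fastforce
  interpret partitioned_graph Vg E V m x \<gamma> q d f ..
  have "(2 * real m ^ 3 + 2 * real m) * (1 + d) * real (card bad)
      \<le> (2 * real m ^ 3 + 2 * real m) * (1 + d) * (real (card Vg) * \<delta>)"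
    using f d unfolding bad_def by (intro mult_left_mono) auto
  also have "\<dots> \<le> real (card Vg) * \<epsilon> / 16"
    using mult_left_mono[OF d_exp, of "real (card Vg)"] unfolding \<delta>_def by (simp add: mult_ac)
  finally show ?thesis
    by (intro exists_disjoint_paths_few_endpoint_neighbours path_budget[OF \<epsilon> x(3) d_poly _ size False])
qed

lemma exp_decay_le:
  fixes a d :: real
  assumes a: "a > 0" and d: "d \<ge> 1"
  shows "(1 + d) * exp (- (a * d)) \<le> 8 / (a ^ 2 * d)"
proof -
  have ad: "a * d > 0" using a d by simp
  have "a * d / 2 \<le> exp (a * d / 2)" using exp_ge_add_one_self[of "a * d / 2"] by linarith
  then have "(a * d / 2) ^ 2 \<le> exp (a * d / 2) ^ 2" using ad by (intro power_mono) auto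
  also have "exp (a * d / 2) ^ 2 = exp (a * d)" by (simp flip: exp_of_nat_mult)
  finally have e: "(a * d) ^ 2 / 4 \<le> exp (a * d)" by (simp add: power_divide)
  have "(1 + d) * exp (- (a * d)) = (1 + d) / exp (a * d)" by (simp add: exp_minus field_simps)
  also have "\<dots> \<le> (1 + d) / ((a * d) ^ 2 / 4)" using e ad d by (intro divide_left_mono) (auto intro!: mult_pos_pos)
  also have "\<dots> \<le> (2 * d) / ((a * d) ^ 2 / 4)" using d ad by (intro divide_right_mono) auto
  also have "\<dots> = 8 / (a ^ 2 * d)" using d by (simp add: field_simps power2_eq_square)
  finally show ?thesis .
qed

definition tolerance :: "nat \<Rightarrow> real \<Rightarrow> real" where
  "tolerance m \<epsilon> = \<epsilon> / (8 * (real m ^ 2 + 2))"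

definition degree_threshold :: "nat \<Rightarrow> real \<Rightarrow> real" where
  "degree_threshold m \<epsilon> = max 1 (max (64 * (real m ^ 2 + real m) / \<epsilon>)
     (256 * real m * (2 * real m ^ 3 + 2 * real m) / ((chernoff_rate (tolerance m \<epsilon>) / (4 * real m)) ^ 2 * \<epsilon>)))"

lemma tolerance_bounds:
  assumes "0 < \<epsilon>" "\<epsilon> \<le> 1"
  shows "0 < tolerance m \<epsilon>" "tolerance m \<epsilon> \<le> 1/16" "tolerance m \<epsilon> * (5 + 4 * real m ^ 2) \<le> \<epsilon> / 2"
proof -
  have den: "8 * (real m ^ 2 + 2) \<ge> 16" by simp
  have pos: "0 < 8 * (real m ^ 2 + 2)" by (simp add: add_nonneg_pos)
  show "0 < tolerance m \<epsilon>" unfolding tolerance_def using assms(1) den by (simp add: add_nonneg_pos)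
  have "tolerance m \<epsilon> \<le> 1 / (8 * (real m ^ 2 + 2))"
    unfolding tolerance_def using assms den by (intro divide_right_mono) auto
  also have "\<dots> \<le> 1 / 16" using den pos by (intro divide_left_mono) auto
  finally show "tolerance m \<epsilon> \<le> 1/16" .
  have "(5 + 4 * real m ^ 2) / (8 * (real m ^ 2 + 2)) \<le> 1 / 2" using pos by (simp add: divide_le_eq)
  then have "\<epsilon> * ((5 + 4 * real m ^ 2) / (8 * (real m ^ 2 + 2))) \<le> \<epsilon> * (1 / 2)"
    using assms(1) by (intro mult_left_mono) auto
  then show "tolerance m \<epsilon> * (5 + 4 * real m ^ 2) \<le> \<epsilon> / 2" unfolding tolerance_def by simp
qed

lemma degree_threshold_exp:
  assumes m: "1 \<le> m" and \<epsilon>: "0 < \<epsilon>" "\<epsilon> \<le> 1" and d: "degree_threshold m \<epsilon> \<le> d"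
  shows "(2 * real m ^ 3 + 2 * real m) * (1 + d)
      * (2 * real m * exp (- chernoff_rate (tolerance m \<epsilon>) * (d / 4) / real m)) \<le> \<epsilon> / 16"
proof -
  define a where "a = chernoff_rate (tolerance m \<epsilon>) / (4 * real m)"
  define K where "K = 2 * real m ^ 3 + 2 * real m"
  have "0 < a"
    unfolding a_def using chernoff_rate_pos tolerance_bounds[OF \<epsilon>, of m] m by simp
  have "0 < K" unfolding K_def using m by (simp add: add_pos_pos)
  have "1 \<le> d" "256 * real m * K / (a ^ 2 * \<epsilon>) \<le> d"
    using d unfolding degree_threshold_def a_def K_def by simp_all
  have "(2 * real m ^ 3 + 2 * real m) * (1 + d)
      * (2 * real m * exp (- chernoff_rate (tolerance m \<epsilon>) * (d / 4) / real m))
      = (2 * real m * K) * ((1 + d) * exp (- (a * d)))"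
    unfolding a_def K_def using m by (simp add: field_simps)
  also have "\<dots> \<le> (2 * real m * K) * (8 / (a ^ 2 * d))"
    using exp_decay_le[OF \<open>0 < a\<close> \<open>1 \<le> d\<close>] \<open>0 < K\<close> by (intro mult_left_mono) auto
  also have "\<dots> \<le> \<epsilon> / 16"
    using \<open>256 * real m * K / (a ^ 2 * \<epsilon>) \<le> d\<close> \<open>0 < a\<close> \<epsilon> \<open>1 \<le> d\<close>
    by (simp add: divide_le_eq field_simps)
  finally show ?thesis .
qed

theorem lemma2p4:
  "\<forall>m::nat. m \<ge> 1 \<longrightarrow> (\<forall>\<epsilon>::real. 0 < \<epsilon> \<and> \<epsilon> \<le> 1 \<longrightarrow>
    (\<exists>\<gamma>0::real. \<gamma>0 > 0 \<and> (\<forall>\<gamma>::real. 0 < \<gamma> \<and> \<gamma> \<le> \<gamma>0 \<longrightarrow>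
      (\<exists>d0::real. \<forall>d::real. d \<ge> d0 \<longrightarrow> (\<forall>q::real. q \<ge> 1/2 \<longrightarrow>
        (\<forall>(Vg::nat set) E (V::nat set).
          simple_graph Vg E \<and> (\<forall>v\<in>Vg. real (dG E v Vg) \<le> d) \<and> V \<subseteq> Vg
          \<and> pm_approx (real (card V)) \<gamma> (q * real (card Vg))
          \<and> (\<forall>v\<in>Vg. pm_approx (real (dG E v V)) \<gamma> (q * d))
          \<longrightarrow> (let t = nat \<lceil>(1 - \<epsilon>) * q * real (card Vg) / real m\<rceil> in
               \<exists>Ps::nat list list. length Ps = t
                 \<and> (\<forall>P\<in>set Ps. is_path_in E V P \<and> length P = m)
                 \<and> (\<forall>i<t. \<forall>j<t. i \<noteq> j \<longrightarrow> set (Ps ! i) \<inter> set (Ps ! j) = {})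
                 \<and> (\<forall>v\<in>Vg. real (dG E v ((\<lambda>P. hd P) ` set Ps \<union> (\<lambda>P. last P) ` set Ps))
                              \<le> 4 * d / real m))))))))"
proof (intro allI impI, goal_cases)
  case (1 m \<epsilon>)
  then have m: "1 \<le> m" and \<epsilon>: "0 < \<epsilon>" "\<epsilon> \<le> 1" by auto
  note x = tolerance_bounds[OF \<epsilon>, of m]
  show ?case
  proof (rule exI[of _ "tolerance m \<epsilon>"], intro conjI allI impI exI[of _ "degree_threshold m \<epsilon>"])
    show "0 < tolerance m \<epsilon>" by (rule x(1))
    fix \<gamma> d q :: real and Vg V :: "nat set" and E
    assume \<gamma>: "0 < \<gamma> \<and> \<gamma> \<le> tolerance m \<epsilon>" and d: "degree_threshold m \<epsilon> \<le> d" and q: "1/2 \<le> q"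
      and H: "simple_graph Vg E \<and> (\<forall>v\<in>Vg. real (dG E v Vg) \<le> d) \<and> V \<subseteq> Vg
          \<and> pm_approx (real (card V)) \<gamma> (q * real (card Vg))
          \<and> (\<forall>v\<in>Vg. pm_approx (real (dG E v V)) \<gamma> (q * d))"
    have "1 \<le> d" "64 * (real m ^ 2 + real m) / \<epsilon> \<le> d"
      using d unfolding degree_threshold_def by simp_all
    then show "let t = nat \<lceil>(1 - \<epsilon>) * q * real (card Vg) / real m\<rceil> in
               \<exists>Ps::nat list list. length Ps = t
                 \<and> (\<forall>P\<in>set Ps. is_path_in E V P \<and> length P = m)
                 \<and> (\<forall>i<t. \<forall>j<t. i \<noteq> j \<longrightarrow> set (Ps ! i) \<inter> set (Ps ! j) = {})
                 \<and> (\<forall>v\<in>Vg. real (dG E v ((\<lambda>P. hd P) ` set Ps \<union> (\<lambda>P. last P) ` set Ps))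
                              \<le> 4 * d / real m)"
      unfolding Let_def
      using exists_disjoint_paths_near_regular_set[OF m \<epsilon> x _ _ q _ _ degree_threshold_exp[OF m \<epsilon> d]]
        \<gamma> H by blast
  qed
qed

end
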